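(* Let $P$ be a finite graded poset with $\hat0$ and let $\lambda$ be an ER-labeling of $P$ satisfying the rank two switching property and such that in each interval of $P$ distinct ascent-free maximal chains have distinct words of labels. Then $\lambda$ satisfies the rank two switching property, the braid relation and the cancellative property.
   Context: An E-labeling is a map $\lambda$ from the cover relations of $P$ to a poset $\Lambda$. The word of labels of a saturated chain $x_0\lessdot\cdots\lessdot x_\ell$ is $\lambda(x_0\lessdot x_1)\cdots\lambda(x_{\ell-1}\lessdot x_\ell)$; the chain is increasing if the word is strictly increasing, ascent-free if no $i$ has $\lambda(x_{i-1}\lessdot x_i)<\lambda(x_i\lessdot x_{i+1})$. ER-labeling: every closed interval has exactly one increasing maximal chain. Rank two switching property: for every saturated chain $\hat0=x_0\lessdot\cdots\lessdot x_k$ and every $i$ with $\lambda(x_{i-1}\lessdot x_i)<\lambda(x_i\lessdot x_{i+1})$ there is a unique $x_i'$ with $x_{i-1}\lessdot x_i'\lessdot x_{i+1}$, $\lambda(x_{i-1}\lessdot x_i')=\lambda(x_i\lessdot x_{i+1})$, $\lambda(x_i'\lessdot x_{i+1})=\lambda(x_{i-1}\lessdot x_i)$. Quadratic exchange: for a maximal chain $\mathbf c$ of an interval with an ascent at position $i$, $U_i(\mathbf c)$ replaces $x_i$ by $x_i'$; otherwise $U_i(\mathbf c)=\mathbf c$. For maximal chains of an interval, $\mathbf c_1\sim_\lambda\mathbf c_2$ means they are connected by a sequence of quadratic exchanges (forwards or backwards) within that interval. Braid relation: whenever a maximal chain $\mathbf c$ of an interval has strictly increasing labels at three consecutive positions $i,i+1,i+2$,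 $U_iU_{i+1}U_i(\mathbf c)=U_{i+1}U_iU_{i+1}(\mathbf c)$. Cancellative property: for all $z<x<y$, every maximal chain $\mathbf c$ of $[z,x]$ and maximal chains $\mathbf c_1,\mathbf c_2$ of $[x,y]$, $\mathbf c\cup\mathbf c_1\sim_\lambda\mathbf c\cup\mathbf c_2$ implies $\mathbf c_1\sim_\lambda\mathbf c_2$. *)

theory Defs
  imports Main
begin

text \<open>An edge labeling is a function
  lam :: 'a => 'a => 'l into a poset 'l; only its values on cover
  relations matter.\<close>

definition covers :: "'a::order set \<Rightarrow> 'a \<Rightarrow> 'a \<Rightarrow> bool" where
  "covers P x y \<longleftrightarrow> x \<in> P \<and> y \<in> P \<and> x < y \<and> \<not> (\<exists>z\<in>P. x < z \<and> z < y)"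

definition is_bottom :: "'a::order set \<Rightarrow> 'a \<Rightarrow> bool" where
  "is_bottom P z \<longleftrightarrow> z \<in> P \<and> (\<forall>x\<in>P. z \<le> x)"

definition graded :: "'a::order set \<Rightarrow> bool" where
  "graded P \<longleftrightarrow> (\<exists>\<rho>::'a \<Rightarrow> nat. \<forall>x y. covers P x y \<longrightarrow> \<rho> y = \<rho> x + 1)"

definition saturated :: "'a::order set \<Rightarrow> 'a list \<Rightarrow> bool" where
  "saturated P c \<longleftrightarrow> c \<noteq> [] \<and> (\<forall>i. Suc i < length c \<longrightarrow> covers P (c ! i) (c ! Suc i))"

definition maxchain :: "'a::order set \<Rightarrow> 'a \<Rightarrow> 'a \<Rightarrow> 'a list \<Rightarrow> bool" where
  "maxchain P x y c \<longleftrightarrow> saturated P c \<and> hd c = x \<and> last c = y"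

definition word :: "('a \<Rightarrow> 'a \<Rightarrow> 'l) \<Rightarrow> 'a list \<Rightarrow> 'l list" where
  "word lam c = map (\<lambda>(a, b). lam a b) (zip c (tl c))"

definition increasing :: "('a \<Rightarrow> 'a \<Rightarrow> 'l::order) \<Rightarrow> 'a list \<Rightarrow> bool" where
  "increasing lam c \<longleftrightarrow> sorted_wrt (<) (word lam c)"

definition ascent_at :: "('a \<Rightarrow> 'a \<Rightarrow> 'l::order) \<Rightarrow> 'a list \<Rightarrow> nat \<Rightarrow> bool" where
  "ascent_at lam c i \<longleftrightarrow> 1 \<le> i \<and> i + 1 < length c \<and>
     lam (c ! (i - 1)) (c ! i) < lam (c ! i) (c ! (i + 1))"

definition ascent_free :: "('a \<Rightarrow> 'a \<Rightarrow> 'l::order) \<Rightarrow> 'a list \<Rightarrow> bool" where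
  "ascent_free lam c \<longleftrightarrow> (\<forall>i. \<not> ascent_at lam c i)"

definition ER_labeling :: "'a::order set \<Rightarrow> ('a \<Rightarrow> 'a \<Rightarrow> 'l::order) \<Rightarrow> bool" where
  "ER_labeling P lam \<longleftrightarrow>
     (\<forall>x\<in>P. \<forall>y\<in>P. x \<le> y \<longrightarrow> (\<exists>!c. maxchain P x y c \<and> increasing lam c))"

definition switch_cond :: "'a::order set \<Rightarrow> ('a \<Rightarrow> 'a \<Rightarrow> 'l::order) \<Rightarrow> 'a list \<Rightarrow> nat \<Rightarrow> 'a \<Rightarrow> bool" where
  "switch_cond P lam c i x' \<longleftrightarrow>
     covers P (c ! (i - 1)) x' \<and> covers P x' (c ! (i + 1)) \<and>
     lam (c ! (i - 1)) x' = lam (c ! i) (c ! (i + 1)) \<and>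
     lam x' (c ! (i + 1)) = lam (c ! (i - 1)) (c ! i)"

definition rank_two_switching :: "'a::order set \<Rightarrow> 'a \<Rightarrow> ('a \<Rightarrow> 'a \<Rightarrow> 'l::order) \<Rightarrow> bool" where
  "rank_two_switching P z lam \<longleftrightarrow>
     (\<forall>c i. saturated P c \<and> hd c = z \<and> ascent_at lam c i \<longrightarrow> (\<exists>!x'. switch_cond P lam c i x'))"

definition U :: "'a::order set \<Rightarrow> ('a \<Rightarrow> 'a \<Rightarrow> 'l::order) \<Rightarrow> nat \<Rightarrow> 'a list \<Rightarrow> 'a list" where
  "U P lam i c = (if ascent_at lam c i then c[i := (THE x'. switch_cond P lam c i x')] else c)"

definition qstep :: "'a::order set \<Rightarrow> ('a \<Rightarrow> 'a \<Rightarrow> 'l::order) \<Rightarrow> 'a \<Rightarrow> 'a \<Rightarrow> 'a list \<Rightarrow> 'a list \<Rightarrow> bool" where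
  "qstep P lam x y c d \<longleftrightarrow> maxchain P x y c \<and> maxchain P x y d \<and> (\<exists>i. d = U P lam i c)"

definition qequiv :: "'a::order set \<Rightarrow> ('a \<Rightarrow> 'a \<Rightarrow> 'l::order) \<Rightarrow> 'a \<Rightarrow> 'a \<Rightarrow> 'a list \<Rightarrow> 'a list \<Rightarrow> bool" where
  "qequiv P lam x y c1 c2 \<longleftrightarrow> maxchain P x y c1 \<and> maxchain P x y c2 \<and>
     (symclp (qstep P lam x y))\<^sup>*\<^sup>* c1 c2"

definition braid_relation :: "'a::order set \<Rightarrow> ('a \<Rightarrow> 'a \<Rightarrow> 'l::order) \<Rightarrow> bool" where
  "braid_relation P lam \<longleftrightarrow>
     (\<forall>x y c i. maxchain P x y c \<and> 1 \<le> i \<and> i + 3 \<le> length c \<and>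
        lam (c ! (i - 1)) (c ! i) < lam (c ! i) (c ! (i + 1)) \<and>
        lam (c ! i) (c ! (i + 1)) < lam (c ! (i + 1)) (c ! (i + 2)) \<longrightarrow>
        U P lam i (U P lam (i + 1) (U P lam i c)) =
        U P lam (i + 1) (U P lam i (U P lam (i + 1) c)))"

text \<open>Cancellative property; the union of a maximal chain c of [z,x] with a
  maximal chain d of [x,y] is the concatenation c @ tl d.\<close>
definition cancellative :: "'a::order set \<Rightarrow> ('a \<Rightarrow> 'a \<Rightarrow> 'l::order) \<Rightarrow> bool" where
  "cancellative P lam \<longleftrightarrow>
     (\<forall>z\<in>P. \<forall>x\<in>P. \<forall>y\<in>P. \<forall>c c1 c2. z < x \<and> x < y \<and>
        maxchain P z x c \<and> maxchain P x y c1 \<and> maxchain P x y c2 \<and>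
        qequiv P lam z y (c @ tl c1) (c @ tl c2) \<longrightarrow> qequiv P lam x y c1 c2)"

end

theory Submission
  imports Defs
begin

text \<open>A quadratic exchange at an ascent turns the word of a chain \<open>\<dots> x y \<dots>\<close> with \<open>x < y\<close>
  into \<open>\<dots> y x \<dots>\<close>. So equivalent chains have words related by swaps of adjacent comparable
  labels, and in such a class of words there is at most one ascent-free word; since exchanges
  strictly decrease a weight of the word, every chain is equivalent to an ascent-free one, and as
  ascent-free chains are determined by their words, two chains are equivalent exactly when their
  words are. Cancellation then reduces to cancelling a common prefix of words, and the braid
  relation to the fact that both of its sides act on words by the same product of adjacent
  transpositions, so the two resulting chains can differ only on a rank three window whose word,
  three labels in decreasing order, is ascent-free.\<close>

section \<open>Swapping adjacent ascents in words\<close>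

definition ascent_swap :: "'l::order list \<Rightarrow> 'l list \<Rightarrow> bool" where
  "ascent_swap u v \<longleftrightarrow> (\<exists>p x y q. u = p @ x # y # q \<and> v = p @ y # x # q \<and> x < y)"

definition swap_adjacent :: "nat \<Rightarrow> 'a list \<Rightarrow> 'a list" where
  "swap_adjacent j w = w[j := w ! Suc j, Suc j := w ! j]"

lemma length_swap_adjacent [simp]: "length (swap_adjacent j w) = length w"
  by (simp add: swap_adjacent_def)

lemma nth_swap_adjacent:
  "Suc j < length w \<Longrightarrow>
    swap_adjacent j w ! k = (if k = j then w ! Suc j else if k = Suc j then w ! j else w ! k)"
  by (simp add: swap_adjacent_def nth_list_update)

lemma swap_adjacent_braid:
  assumes "Suc (Suc j) < length w"
  shows "swap_adjacent j (swap_adjacent (Suc j) (swap_adjacent j w)) =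
    swap_adjacent (Suc j) (swap_adjacent j (swap_adjacent (Suc j) w))"
  using assms by (intro nth_equalityI) (simp_all add: nth_swap_adjacent)

lemma ascent_swap_swap_adjacent:
  assumes "Suc j < length w" and "w ! j < w ! Suc j"
  shows "ascent_swap w (swap_adjacent j w)"
proof -
  define p where "p = take j w"
  have len: "length p = j" using assms(1) by (simp add: p_def)
  have w: "w = p @ w ! j # w ! Suc j # drop (Suc (Suc j)) w"
    using assms(1) by (simp add: p_def Cons_nth_drop_Suc)
  have "swap_adjacent j w = p @ w ! Suc j # w ! j # drop (Suc (Suc j)) w"
    unfolding swap_adjacent_def by (subst w, simp add: list_update_append len)
  then show ?thesis using w assms(2) unfolding ascent_swap_def by blast
qed

lemma ascent_swap_length: "ascent_swap u v \<Longrightarrow> length u = length v"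
  by (auto simp: ascent_swap_def)

lemma equivclp_ascent_swap_length: "equivclp ascent_swap u v \<Longrightarrow> length u = length v"
  by (induction rule: equivclp_induct) (auto dest: ascent_swap_length)

lemma ascent_swap_remove1:
  assumes "ascent_swap u v"
  shows "equivclp ascent_swap (remove1 a u) (remove1 a v)"
proof -
  obtain p x y q where u: "u = p @ x # y # q" and v: "v = p @ y # x # q" and "x < y"
    using assms by (auto simp: ascent_swap_def)
  then have "x \<noteq> y" by simp
  show ?thesis
  proof (cases "a \<in> set p")
    case True
    then have "remove1 a u = remove1 a p @ x # y # q" "remove1 a v = remove1 a p @ y # x # q"
      using u v by (simp_all add: remove1_append)
    then have "ascent_swap (remove1 a u) (remove1 a v)"
      using \<open>x < y\<close> unfolding ascent_swap_def by blast
    then show ?thesis by (rule r_into_equivclp)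
  next
    case False
    show ?thesis
    proof (cases "x = a \<or> y = a")
      case True
      then show ?thesis using False u v \<open>x \<noteq> y\<close> by (auto simp: remove1_append)
    next
      case neither: False
      then have "remove1 a u = p @ x # y # remove1 a q" "remove1 a v = p @ y # x # remove1 a q"
        using neither False u v by (auto simp: remove1_append)
      then have "ascent_swap (remove1 a u) (remove1 a v)"
        using \<open>x < y\<close> unfolding ascent_swap_def by blast
      then show ?thesis by (rule r_into_equivclp)
    qed
  qed
qed

lemma equivclp_ascent_swap_remove1:
  "equivclp ascent_swap u v \<Longrightarrow> equivclp ascent_swap (remove1 a u) (remove1 a v)"
proof (induction rule: equivclp_induct)
  case (step v w)
  from step.hyps(2) have "equivclp ascent_swap (remove1 a v) (remove1 a w)"
    by (auto intro: ascent_swap_remove1 equivclp_sym)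
  with step.IH show ?case by (rule equivclp_trans)
qed simp

lemma equivclp_ascent_swap_append_cancel:
  "equivclp ascent_swap (p @ u) (p @ v) \<Longrightarrow> equivclp ascent_swap u v"
proof (induction p)
  case (Cons a p)
  then show ?case using equivclp_ascent_swap_remove1[of "a # p @ u" "a # p @ v" a] by simp
qed simp

lemma ascent_swap_first_occurrence:
  assumes "ascent_swap u v \<or> ascent_swap v u" and "a \<in> set u"
    and "\<forall>w\<in>set (takeWhile (\<lambda>t. t \<noteq> a) u). w < a \<or> a < w"
  shows "\<forall>w\<in>set (takeWhile (\<lambda>t. t \<noteq> a) v). w < a \<or> a < w"
proof -
  obtain p x y q where u: "u = p @ x # y # q" and v: "v = p @ y # x # q"
    and xy: "x < y \<or> y < x"
    using assms(1) by (auto simp: ascent_swap_def)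
  show ?thesis
  proof (cases "a \<in> set p")
    case True
    then show ?thesis using assms(3) u v by auto
  next
    case False
    then have "takeWhile (\<lambda>t. t \<noteq> a) (p @ r) = p @ takeWhile (\<lambda>t. t \<noteq> a) r" for r
      by (intro takeWhile_append2) auto
    then show ?thesis using assms(3) u v xy by (cases "x = a"; cases "y = a") auto
  qed
qed

text \<open>Every letter that a word equivalent to \<open>a # u\<close> places before its first \<open>a\<close> must have
  been swapped past \<open>a\<close>, hence is comparable with \<open>a\<close>.\<close>
lemma equivclp_Cons_first_occurrence:
  assumes "equivclp ascent_swap (a # u) v"
  shows "a \<in> set v \<and> (\<forall>w\<in>set (takeWhile (\<lambda>t. t \<noteq> a) v). w < a \<or> a < w)"
  using assms
proof (induction rule: equivclp_induct)
  case (step v w)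
  have "set v = set w" using step.hyps(2) by (auto simp: ascent_swap_def)
  with step.IH ascent_swap_first_occurrence[OF step.hyps(2)] show ?case by simp
qed simp

lemma successively_not_less_prefix_greater:
  fixes a b :: "'l::order"
  assumes "successively (\<lambda>x y. \<not> x < y) (p @ b # r)" and "a \<le> b"
    and "\<forall>y\<in>set p. y < a \<or> a < y"
  shows "\<forall>y\<in>set p. a < y"
  using assms
proof (induction p arbitrary: b r rule: rev_induct)
  case (snoc y p)
  have "\<not> y < b" using snoc.prems(1) by (simp add: successively_append_iff)
  moreover have "y < a \<or> a < y" using snoc.prems(3) by simp
  ultimately have "a < y" using less_le_trans[of y a b] snoc.prems(2) by blast
  moreover have "\<forall>y\<in>set p. a < y"
  proof (rule snoc.IH)
    show "successively (\<lambda>x y. \<not> x < y) (p @ y # b # r)" using snoc.prems(1) by simp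
    show "a \<le> y" using \<open>a < y\<close> by simp
    show "\<forall>y\<in>set p. y < a \<or> a < y" using snoc.prems(3) by simp
  qed
  ultimately show ?case by simp
qed simp

lemma equivclp_ascent_swap_hd_less:
  assumes "equivclp ascent_swap (a # u) (b # v)" and "successively (\<lambda>x y. \<not> x < y) (b # v)"
    and "b \<noteq> a"
  shows "a < b"
proof -
  define p where "p = takeWhile (\<lambda>t. t \<noteq> a) (b # v)"
  note first_occurrence = equivclp_Cons_first_occurrence[OF assms(1), folded p_def]
  have a_mem: "a \<in> set (b # v)" using first_occurrence by (rule conjunct1)
  have p_comparable: "\<forall>w\<in>set p. w < a \<or> a < w" using first_occurrence by (rule conjunct2)
  have ne: "dropWhile (\<lambda>t. t \<noteq> a) (b # v) \<noteq> []"
    using a_mem by (auto simp: dropWhile_eq_Nil_conv)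
  then obtain q where q: "dropWhile (\<lambda>t. t \<noteq> a) (b # v) = a # q"
    using hd_dropWhile[OF ne] by (cases "dropWhile (\<lambda>t. t \<noteq> a) (b # v)") auto
  have "b # v = p @ a # q" unfolding p_def q[symmetric] by simp
  then have "\<forall>y\<in>set p. a < y"
    using successively_not_less_prefix_greater[OF _ order_refl p_comparable] assms(2) by simp
  moreover have "b \<in> set p" using assms(3) by (simp add: p_def)
  ultimately show ?thesis by blast
qed

theorem ascent_free_word_unique:
  assumes "equivclp ascent_swap u v"
    and "successively (\<lambda>x y. \<not> x < y) u" and "successively (\<lambda>x y. \<not> x < y) v"
  shows "u = v"
  using assms
proof (induction u arbitrary: v)
  case Nil
  then show ?case using equivclp_ascent_swap_length[OF Nil.prems(1)] by simp
next
  case (Cons a u)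
  obtain b v' where v: "v = b # v'"
    using equivclp_ascent_swap_length[OF Cons.prems(1)] by (cases v) auto
  have "b = a"
  proof (rule ccontr)
    assume "b \<noteq> a"
    have "a < b"
      using Cons.prems(1,3) \<open>b \<noteq> a\<close> unfolding v by (rule equivclp_ascent_swap_hd_less)
    moreover have "b < a"
      using equivclp_sym[OF Cons.prems(1)] Cons.prems(2) not_sym[OF \<open>b \<noteq> a\<close>] unfolding v
      by (rule equivclp_ascent_swap_hd_less)
    ultimately show False by simp
  qed
  then have "equivclp ascent_swap u v'"
    using Cons.prems(1) v equivclp_ascent_swap_append_cancel[of "[a]"] by simp
  moreover have "successively (\<lambda>x y. \<not> x < y) u" "successively (\<lambda>x y. \<not> x < y) v'"
    using Cons.prems(2,3) v by (auto simp: successively_Cons)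
  ultimately show ?case using Cons.IH v \<open>b = a\<close> by simp
qed

text \<open>\<open>position_weight h w = (\<Sum>i<length w. i * h (w ! i))\<close>\<close>
fun position_weight :: "('l \<Rightarrow> nat) \<Rightarrow> 'l list \<Rightarrow> nat" where
  "position_weight h [] = 0"
| "position_weight h (a # w) = sum_list (map h w) + position_weight h w"

definition strict_rank :: "'l::order set \<Rightarrow> 'l \<Rightarrow> nat" where
  "strict_rank L l = card {m \<in> L. m < l}"

lemma strict_rank_less: "finite L \<Longrightarrow> a \<in> L \<Longrightarrow> a < b \<Longrightarrow> strict_rank L a < strict_rank L b"
  unfolding strict_rank_def by (rule psubset_card_mono) (auto dest: less_trans)

lemma ascent_swap_position_weight_less:
  assumes "ascent_swap u v" and "finite L" and "set u \<subseteq> L"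
  shows "position_weight (strict_rank L) v < position_weight (strict_rank L) u"
proof -
  obtain p x y q where u: "u = p @ x # y # q" and v: "v = p @ y # x # q" and "x < y"
    using assms(1) by (auto simp: ascent_swap_def)
  then have "strict_rank L x < strict_rank L y"
    using assms(2,3) by (intro strict_rank_less) auto
  then show ?thesis unfolding u v by (induction p) auto
qed

section \<open>Words of saturated chains\<close>

lemma length_word [simp]: "length (word lam c) = length c - 1"
  by (simp add: word_def)

lemma nth_word: "Suc j < length c \<Longrightarrow> word lam c ! j = lam (c ! j) (c ! Suc j)"
  by (simp add: word_def nth_tl)

lemma word_simps [simp]:
  "word lam [] = []" "word lam [a] = []" "word lam (a # b # c) = lam a b # word lam (b # c)"
  by (simp_all add: word_def)

lemma word_append_tl:
  "c \<noteq> [] \<Longrightarrow> d \<noteq> [] \<Longrightarrow> last c = hd d \<Longrightarrow> word lam (c @ tl d) = word lam c @ word lam d"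
proof (induction c rule: induct_list012)
  case (2 a)
  then show ?case by (cases d) auto
qed simp_all

lemma word_take_drop: "word lam (take (Suc n) (drop j c)) = take n (drop j (word lam c))"
proof (rule nth_equalityI)
  fix i assume "i < length (word lam (take (Suc n) (drop j c)))"
  then have "i < n" "Suc (j + i) < length c" by auto
  then show "word lam (take (Suc n) (drop j c)) ! i = take n (drop j (word lam c)) ! i"
    by (simp add: nth_word)
qed simp

lemma saturated_covers: "saturated P c \<Longrightarrow> Suc j < length c \<Longrightarrow> covers P (c ! j) (c ! Suc j)"
  by (simp add: saturated_def)

lemma saturated_nth_mem: "saturated P c \<Longrightarrow> Suc j < length c \<Longrightarrow> c ! j \<in> P \<and> c ! Suc j \<in> P"
  using saturated_covers covers_def by metis

lemma saturated_snoc: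
  assumes "saturated P c" and "covers P (last c) b"
  shows "saturated P (c @ [b])"
  unfolding saturated_def
proof (intro conjI allI impI)
  fix k assume k: "Suc k < length (c @ [b])"
  show "covers P ((c @ [b]) ! k) ((c @ [b]) ! Suc k)"
  proof (cases "Suc k < length c")
    case True
    then show ?thesis using assms(1) by (simp add: saturated_def nth_append)
  next
    case False
    then have "k = length c - 1" "c \<noteq> []" using k assms(1) by (auto simp: saturated_def)
    then show ?thesis using assms(2) by (simp add: nth_append last_conv_nth)
  qed
qed simp

lemma saturated_hd_le: "saturated P c \<Longrightarrow> j < length c \<Longrightarrow> hd c \<le> c ! j"
proof (induction j)
  case 0
  then show ?case by (simp add: hd_conv_nth saturated_def)
next
  case (Suc j)
  then have "c ! j < c ! Suc j" using saturated_covers covers_def by metis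
  then show ?case using Suc by auto
qed

lemma maxchain_le:
  assumes "maxchain P x y c"
  shows "x \<le> y"
proof -
  have "c \<noteq> []" "saturated P c" "hd c = x" "last c = y"
    using assms by (auto simp: maxchain_def saturated_def)
  then show ?thesis using saturated_hd_le[of P c "length c - 1"] by (simp add: last_conv_nth)
qed

lemma maxchain_take_drop:
  assumes "saturated P c" and "j + n < length c"
  shows "maxchain P (c ! j) (c ! (j + n)) (take (Suc n) (drop j c))"
proof -
  have "Suc n \<le> length c - j" using assms(2) by simp
  then show ?thesis
    using assms by (auto simp: maxchain_def saturated_def hd_drop_conv_nth last_conv_nth min_def)
qed

lemma word_subset_labels:
  assumes "saturated P c"
  shows "set (word lam c) \<subseteq> (\<lambda>(a, b). lam a b) ` (P \<times> P)"
proof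
  fix l assume "l \<in> set (word lam c)"
  then obtain j where "j < length (word lam c)" "l = word lam c ! j" by (auto simp: in_set_conv_nth)
  then have j: "Suc j < length c" "l = lam (c ! j) (c ! Suc j)" by (auto simp: nth_word)
  then have "(c ! j, c ! Suc j) \<in> P \<times> P" using saturated_nth_mem[OF assms] by simp
  then show "l \<in> (\<lambda>(a, b). lam a b) ` (P \<times> P)" using j(2) by force
qed

lemma ascent_at_iff_word:
  "ascent_at lam c i \<longleftrightarrow> 1 \<le> i \<and> i < length (word lam c) \<and> word lam c ! (i - 1) < word lam c ! i"
  by (cases i) (auto simp: ascent_at_def nth_word)

lemma ascent_free_iff_successively:
  "ascent_free lam c \<longleftrightarrow> successively (\<lambda>x y. \<not> x < y) (word lam c)"
  unfolding ascent_free_def ascent_at_iff_word successively_conv_nth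
proof (intro iffI allI impI)
  fix j assume "\<forall>i. \<not> (1 \<le> i \<and> i < length (word lam c) \<and> word lam c ! (i - 1) < word lam c ! i)"
    and "Suc j < length (word lam c)"
  then show "\<not> word lam c ! j < word lam c ! Suc j" by (auto dest: spec[of _ "Suc j"])
next
  fix i assume "\<forall>j. Suc j < length (word lam c) \<longrightarrow> \<not> word lam c ! j < word lam c ! Suc j"
  then show "\<not> (1 \<le> i \<and> i < length (word lam c) \<and> word lam c ! (i - 1) < word lam c ! i)"
    by (cases i) auto
qed

lemma length_U [simp]: "length (U P lam i c) = length c"
  by (simp add: U_def)

lemma nth_U_other: "k \<noteq> i \<Longrightarrow> U P lam i c ! k = c ! k"
  by (simp add: U_def)

definition switched ::
    "'a::order set \<Rightarrow> ('a \<Rightarrow> 'a \<Rightarrow> 'l::order) \<Rightarrow> 'a \<Rightarrow> 'a \<Rightarrow> 'a \<Rightarrow> 'a \<Rightarrow> bool" where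
  "switched P lam a b e x' \<longleftrightarrow>
     covers P a x' \<and> covers P x' e \<and> lam a x' = lam b e \<and> lam x' e = lam a b"

lemma switch_cond_eq_switched:
  "switch_cond P lam c i = switched P lam (c ! (i - 1)) (c ! i) (c ! (i + 1))"
  by (auto simp: switch_cond_def switched_def fun_eq_iff)

lemma saturated_update_switched:
  assumes "saturated P c" and "switched P lam (c ! (i - 1)) (c ! i) (c ! (i + 1)) x'"
    and "1 \<le> i" and "i + 1 < length c"
  shows "saturated P (c[i := x'])"
  using assms unfolding saturated_def switched_def
  by (auto simp: nth_list_update)

lemma word_update_switched:
  assumes "switched P lam (c ! (i - 1)) (c ! i) (c ! (i + 1)) x'"
    and "1 \<le> i" and "i + 1 < length c"
  shows "word lam (c[i := x']) = swap_adjacent (i - 1) (word lam c)"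
  using assms unfolding switched_def
  by (intro nth_equalityI) (auto simp: nth_word nth_list_update nth_swap_adjacent)

section \<open>Quadratic exchanges\<close>

definition distinct_ascent_free_words :: "'a::order set \<Rightarrow> ('a \<Rightarrow> 'a \<Rightarrow> 'l::order) \<Rightarrow> bool" where
  "distinct_ascent_free_words P lam \<longleftrightarrow>
     (\<forall>x\<in>P. \<forall>y\<in>P. \<forall>c1 c2. x \<le> y \<and> maxchain P x y c1 \<and> maxchain P x y c2 \<and>
        ascent_free lam c1 \<and> ascent_free lam c2 \<and> c1 \<noteq> c2 \<longrightarrow> word lam c1 \<noteq> word lam c2)"

lemma distinct_ascent_free_wordsD:
  assumes "distinct_ascent_free_words P lam" and "maxchain P x y c1" and "maxchain P x y c2"
    and "x \<in> P" and "y \<in> P" and "ascent_free lam c1" and "ascent_free lam c2"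
    and "word lam c1 = word lam c2"
  shows "c1 = c2"
  using assms maxchain_le unfolding distinct_ascent_free_words_def by blast

lemma saturated_eq_if_agree_outside_window:
  assumes distinct: "distinct_ascent_free_words P lam"
    and "saturated P c" and "saturated P d" and len: "length c = length d"
    and agree: "\<And>k. k \<le> j \<or> j + n \<le> k \<Longrightarrow> c ! k = d ! k"
    and window: "0 < n" "j + n < length c"
    and words: "word lam c = word lam d"
    and window_ascent_free: "successively (\<lambda>x y. \<not> x < y) (take n (drop j (word lam c)))"
  shows "c = d"
proof -
  let ?wc = "take (Suc n) (drop j c)" and ?wd = "take (Suc n) (drop j d)"
  have "maxchain P (c ! j) (c ! (j + n)) ?wc" "maxchain P (c ! j) (c ! (j + n)) ?wd"
    using maxchain_take_drop[OF assms(2) window(2)] maxchain_take_drop[OF assms(3), of j n]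
      window len agree[of j] agree[of "j + n"] by simp_all
  moreover have "c ! j \<in> P" "c ! (j + n) \<in> P"
    using saturated_nth_mem[OF assms(2), of j] saturated_nth_mem[OF assms(2), of "j + n - 1"] window
    by auto
  moreover have "ascent_free lam ?wc" "ascent_free lam ?wd" "word lam ?wc = word lam ?wd"
    using words window_ascent_free by (simp_all add: ascent_free_iff_successively word_take_drop)
  ultimately have windows: "?wc = ?wd" by (rule distinct_ascent_free_wordsD[OF distinct])
  show ?thesis
  proof (rule nth_equalityI)
    fix k assume "k < length c"
    show "c ! k = d ! k"
    proof (cases "k \<le> j \<or> j + n \<le> k")
      case False
      then have "?wc ! (k - j) = c ! k" "?wd ! (k - j) = d ! k" using window len by auto
      then show ?thesis using windows by simp
    qed (rule agree)
  qed (rule len)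
qed

locale switching_labeling =
  fixes P :: "'a::order set" and z :: 'a and lam :: "'a \<Rightarrow> 'a \<Rightarrow> 'l::order"
  assumes bottom: "is_bottom P z"
    and ER: "ER_labeling P lam"
    and switching: "rank_two_switching P z lam"
begin

text \<open>The switching property is only assumed along chains starting at \<open>z\<close>; any two covers
  \<open>a \<lessdot> b \<lessdot> e\<close> lie on such a chain, obtained from the increasing chain of \<open>[z, a]\<close>.\<close>
lemma switched_ex1:
  assumes ab: "covers P a b" and be: "covers P b e" and ascent: "lam a b < lam b e"
  shows "\<exists>!x'. switched P lam a b e x'"
proof -
  have "z \<le> a" "z \<in> P" "a \<in> P" using bottom ab by (auto simp: is_bottom_def covers_def)
  then have "\<exists>!d. maxchain P z a d \<and> increasing lam d"
    using ER unfolding ER_labeling_def by simp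
  then obtain d where d: "maxchain P z a d" by auto
  then have "d \<noteq> []" by (simp add: maxchain_def saturated_def)
  define c where "c = d @ [b, e]"
  have "saturated P (d @ [b])" using saturated_snoc[of P d b] d ab by (simp add: maxchain_def)
  then have "saturated P c" using be saturated_snoc[of P "d @ [b]" e] by (simp add: c_def)
  moreover have nth: "c ! (length d - 1) = a" "c ! length d = b" "c ! (length d + 1) = e"
    and "hd c = z"
    using d \<open>d \<noteq> []\<close> by (auto simp: c_def nth_append maxchain_def last_conv_nth)
  moreover have "ascent_at lam c (length d)"
    using \<open>d \<noteq> []\<close> nth ascent by (simp add: ascent_at_def c_def Suc_le_eq)
  ultimately have "\<exists>!x'. switch_cond P lam c (length d) x'"
    using rank_two_switching_def[THEN iffD1, OF switching, rule_format] by simp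
  then show ?thesis using nth by (simp add: switch_cond_eq_switched)
qed

lemma U_ascent:
  assumes "saturated P c" and "ascent_at lam c i"
  obtains x' where "switched P lam (c ! (i - 1)) (c ! i) (c ! (i + 1)) x'"
    and "U P lam i c = c[i := x']"
proof -
  have "\<exists>!x'. switched P lam (c ! (i - 1)) (c ! i) (c ! (i + 1)) x'"
    using assms saturated_covers[of P c "i - 1"] saturated_covers[of P c i]
    by (intro switched_ex1) (auto simp: ascent_at_def)
  from theI'[OF this] show ?thesis
    using that assms(2) by (simp add: U_def switch_cond_eq_switched)
qed

lemma saturated_U:
  assumes "saturated P c"
  shows "saturated P (U P lam i c)"
proof (cases "ascent_at lam c i")
  case True
  with assms obtain x' where sw: "switched P lam (c ! (i - 1)) (c ! i) (c ! (i + 1)) x'"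
    and "U P lam i c = c[i := x']"
    by (rule U_ascent)
  moreover have "1 \<le> i" "i + 1 < length c" using True by (simp_all add: ascent_at_def)
  ultimately show ?thesis using saturated_update_switched[OF assms sw] by simp
qed (use assms in \<open>simp add: U_def\<close>)

lemma word_U:
  assumes "saturated P c"
  shows "word lam (U P lam i c) =
    (if ascent_at lam c i then swap_adjacent (i - 1) (word lam c) else word lam c)"
proof (cases "ascent_at lam c i")
  case True
  with assms obtain x' where sw: "switched P lam (c ! (i - 1)) (c ! i) (c ! (i + 1)) x'"
    and "U P lam i c = c[i := x']"
    by (rule U_ascent)
  moreover have "1 \<le> i" "i + 1 < length c" using True by (simp_all add: ascent_at_def)
  ultimately show ?thesis using word_update_switched[OF sw] True by simp
qed (simp add: U_def)

lemma maxchain_U: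
  assumes "maxchain P x y c"
  shows "maxchain P x y (U P lam i c)"
proof (cases "ascent_at lam c i")
  case True
  then have i: "1 \<le> i" "i + 1 < length c" by (simp_all add: ascent_at_def)
  then have ne: "c \<noteq> []" "U P lam i c \<noteq> []"
    using length_U[of P lam i c] by (auto simp del: length_U)
  have "hd (U P lam i c) = hd c" using ne i by (simp add: hd_conv_nth nth_U_other)
  moreover have "last (U P lam i c) = last c" using ne i by (simp add: last_conv_nth nth_U_other)
  ultimately show ?thesis using assms saturated_U by (simp add: maxchain_def)
qed (use assms in \<open>simp add: U_def\<close>)

lemma ascent_swap_word_U:
  assumes "saturated P c" and "ascent_at lam c i"
  shows "ascent_swap (word lam c) (word lam (U P lam i c))"
proof -
  have "1 \<le> i" "i < length (word lam c)" "word lam c ! (i - 1) < word lam c ! i"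
    using assms(2) by (simp_all add: ascent_at_iff_word)
  then have "ascent_swap (word lam c) (swap_adjacent (i - 1) (word lam c))"
    using ascent_swap_swap_adjacent[of "i - 1" "word lam c"] by simp
  then show ?thesis using assms by (simp add: word_U)
qed

lemma qstep_word_equiv:
  assumes "qstep P lam x y c d"
  shows "equivclp ascent_swap (word lam c) (word lam d)"
proof -
  obtain i where c: "maxchain P x y c" and d: "d = U P lam i c"
    using assms by (auto simp: qstep_def)
  show ?thesis
  proof (cases "ascent_at lam c i")
    case True
    then have "ascent_swap (word lam c) (word lam d)"
      using c d ascent_swap_word_U by (simp add: maxchain_def)
    then show ?thesis by (rule r_into_equivclp)
  qed (simp add: d U_def)
qed

lemma equivclp_qstep_word_equiv:
  assumes "equivclp (qstep P lam x y) c d"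
  shows "equivclp ascent_swap (word lam c) (word lam d)"
  using assms
proof (induction rule: equivclp_induct)
  case (step d e)
  from step.hyps(2) have "equivclp ascent_swap (word lam d) (word lam e)"
    using qstep_word_equiv[of x y d e] equivclp_sym[OF qstep_word_equiv[of x y e d]] by blast
  with step.IH show ?case by (rule equivclp_trans)
qed simp

lemma ascent_free_reachable:
  assumes "finite P" and "maxchain P x y c"
  shows "\<exists>d. (qstep P lam x y)\<^sup>*\<^sup>* c d \<and> maxchain P x y d \<and> ascent_free lam d"
proof -
  define L where "L = (\<lambda>(a, b). lam a b) ` (P \<times> P)"
  have "finite L" using assms(1) by (simp add: L_def)
  show ?thesis
    using assms(2)
  proof (induction "position_weight (strict_rank L) (word lam c)" arbitrary: c rule: less_induct)
    case less
    show ?case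
    proof (cases "ascent_free lam c")
      case False
      then obtain i where i: "ascent_at lam c i" by (auto simp: ascent_free_def)
      have step: "qstep P lam x y c (U P lam i c)"
        using less.prems maxchain_U[OF less.prems] unfolding qstep_def by blast
      have "ascent_swap (word lam c) (word lam (U P lam i c))"
        using less.prems i ascent_swap_word_U by (simp add: maxchain_def)
      moreover have "set (word lam c) \<subseteq> L"
        unfolding L_def using less.prems by (intro word_subset_labels) (simp add: maxchain_def)
      ultimately have "position_weight (strict_rank L) (word lam (U P lam i c))
          < position_weight (strict_rank L) (word lam c)"
        using \<open>finite L\<close> by (intro ascent_swap_position_weight_less)
      from less.hyps[OF this maxchain_U[OF less.prems]] obtain d
        where "(qstep P lam x y)\<^sup>*\<^sup>* (U P lam i c) d" "maxchain P x y d" "ascent_free lam d"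
        by blast
      then show ?thesis
        using converse_rtranclp_into_rtranclp[of "qstep P lam x y", OF step] by blast
    qed (use less.prems in \<open>intro exI[of _ c], simp\<close>)
  qed
qed

lemma qequiv_if_word_equiv:
  assumes "finite P" and distinct: "distinct_ascent_free_words P lam"
    and "x \<in> P" and "y \<in> P" and c1: "maxchain P x y c1" and c2: "maxchain P x y c2"
    and "equivclp ascent_swap (word lam c1) (word lam c2)"
  shows "qequiv P lam x y c1 c2"
proof -
  obtain d1 where d1: "(qstep P lam x y)\<^sup>*\<^sup>* c1 d1" "maxchain P x y d1" "ascent_free lam d1"
    using ascent_free_reachable[OF assms(1) c1] by blast
  obtain d2 where d2: "(qstep P lam x y)\<^sup>*\<^sup>* c2 d2" "maxchain P x y d2" "ascent_free lam d2"
    using ascent_free_reachable[OF assms(1) c2] by blast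
  have "equivclp ascent_swap (word lam d1) (word lam c1)"
    using equivclp_qstep_word_equiv[OF converse_rtranclp_into_equivclp[OF d1(1)]] .
  also have "equivclp ascent_swap (word lam c1) (word lam c2)" by fact
  also have "equivclp ascent_swap (word lam c2) (word lam d2)"
    using equivclp_qstep_word_equiv[OF rtranclp_into_equivclp[OF d2(1)]] .
  finally have "word lam d1 = word lam d2"
    using ascent_free_word_unique d1(3) d2(3) by (simp add: ascent_free_iff_successively)
  then have "d1 = d2"
    by (rule distinct_ascent_free_wordsD[OF distinct d1(2) d2(2) assms(3,4) d1(3) d2(3)])
  then have "equivclp (qstep P lam x y) d1 c2"
    using converse_rtranclp_into_equivclp[OF d2(1)] by simp
  then have "equivclp (qstep P lam x y) c1 c2"
    by (rule equivclp_trans[OF rtranclp_into_equivclp[OF d1(1)]])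
  then show ?thesis using c1 c2 by (simp add: qequiv_def equivclp_def)
qed

lemma cancellative:
  assumes "finite P" and "distinct_ascent_free_words P lam"
  shows "cancellative P lam"
  unfolding cancellative_def
proof (intro ballI allI impI)
  fix u x y c c1 c2
  assume "x \<in> P" "y \<in> P" and "u < x \<and> x < y \<and> maxchain P u x c \<and> maxchain P x y c1 \<and>
    maxchain P x y c2 \<and> qequiv P lam u y (c @ tl c1) (c @ tl c2)"
  then have c: "maxchain P u x c" and c1: "maxchain P x y c1" and c2: "maxchain P x y c2"
    and q: "qequiv P lam u y (c @ tl c1) (c @ tl c2)"
    by simp_all
  have "equivclp (qstep P lam u y) (c @ tl c1) (c @ tl c2)"
    using q by (simp add: qequiv_def equivclp_def)
  then have "equivclp ascent_swap (word lam (c @ tl c1)) (word lam (c @ tl c2))"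
    by (rule equivclp_qstep_word_equiv)
  moreover have "c \<noteq> []" "c1 \<noteq> []" "c2 \<noteq> []" "last c = hd c1" "last c = hd c2"
    using c c1 c2 by (simp_all add: maxchain_def saturated_def)
  then have "word lam (c @ tl c1) = word lam c @ word lam c1"
    and "word lam (c @ tl c2) = word lam c @ word lam c2"
    by (simp_all add: word_append_tl)
  ultimately have "equivclp ascent_swap (word lam c1) (word lam c2)"
    using equivclp_ascent_swap_append_cancel by simp
  then show "qequiv P lam x y c1 c2"
    by (rule qequiv_if_word_equiv[OF assms \<open>x \<in> P\<close> \<open>y \<in> P\<close> c1 c2])
qed

lemma word_U_ascent:
  assumes "saturated P c" and "Suc j < length (word lam c)" and "word lam c ! j < word lam c ! Suc j"
  shows "saturated P (U P lam (Suc j) c) \<and>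
    word lam (U P lam (Suc j) c) = swap_adjacent j (word lam c)"
  using assms by (simp add: saturated_U word_U ascent_at_iff_word)

text \<open>Both sides of the braid relation turn the labels \<open>A < B < C\<close> at positions \<open>j, j + 1, j + 2\<close>
  of the word into \<open>C B A\<close> by the same product of adjacent transpositions; so the two chains agree
  outside that window, and inside it they are ascent-free chains with the same word.\<close>
lemma braid_relation:
  assumes distinct: "distinct_ascent_free_words P lam"
  shows "braid_relation P lam"
  unfolding braid_relation_def
proof (intro allI impI)
  fix x y c i
  assume "maxchain P x y c \<and> 1 \<le> i \<and> i + 3 \<le> length c \<and>
    lam (c ! (i - 1)) (c ! i) < lam (c ! i) (c ! (i + 1)) \<and>
    lam (c ! i) (c ! (i + 1)) < lam (c ! (i + 1)) (c ! (i + 2))"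
  moreover obtain j where i: "i = Suc j" using calculation by (cases i) auto
  ultimately have c: "saturated P c" and len: "Suc (Suc j) < length (word lam c)"
    and AB: "word lam c ! j < word lam c ! Suc j"
    and BC: "word lam c ! Suc j < word lam c ! Suc (Suc j)"
    by (auto simp: maxchain_def nth_word)
  note AC = less_trans[OF AB BC]
  let ?s = swap_adjacent and ?w = "word lam c"
  define L where "L = U P lam (Suc j) (U P lam (Suc (Suc j)) (U P lam (Suc j) c))"
  define R where "R = U P lam (Suc (Suc j)) (U P lam (Suc j) (U P lam (Suc (Suc j)) c))"
  have L: "saturated P L \<and> word lam L = ?s j (?s (Suc j) (?s j ?w))"
    using word_U_ascent[OF c _ AB] word_U_ascent[of "U P lam (Suc j) c" "Suc j"]
      word_U_ascent[of "U P lam (Suc (Suc j)) (U P lam (Suc j) c)" j] len AC BC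
    by (simp add: L_def nth_swap_adjacent)
  have R: "saturated P R \<and> word lam R = ?s j (?s (Suc j) (?s j ?w))"
    using word_U_ascent[OF c _ BC] word_U_ascent[of "U P lam (Suc (Suc j)) c" j]
      word_U_ascent[of "U P lam (Suc j) (U P lam (Suc (Suc j)) c)" "Suc j"] len AB AC
    by (simp add: R_def nth_swap_adjacent swap_adjacent_braid)
  have agree: "L ! k = R ! k" if "k \<le> j \<or> j + 3 \<le> k" for k
  proof -
    have "k \<noteq> Suc j" "k \<noteq> Suc (Suc j)" using that by auto
    then show ?thesis by (simp add: L_def R_def nth_U_other)
  qed
  have "successively (\<lambda>x y. \<not> x < y) (take 3 (drop j (word lam L)))"
    using L len AB BC AC by (auto simp: successively_conv_nth less_Suc_eq nth_swap_adjacent)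
  then show "U P lam i (U P lam (i + 1) (U P lam i c)) =
    U P lam (i + 1) (U P lam i (U P lam (i + 1) c))"
    using saturated_eq_if_agree_outside_window[OF distinct, of L R j 3] L R agree len
    by (simp add: L_def R_def i)
qed

end

theorem theorem3p22:
  fixes P :: "'a::order set" and z :: 'a and lam :: "'a \<Rightarrow> 'a \<Rightarrow> 'l::order"
  assumes "finite P"
    and "graded P"
    and "is_bottom P z"
    and "ER_labeling P lam"
    and "rank_two_switching P z lam"
    and "\<forall>x\<in>P. \<forall>y\<in>P. \<forall>c1 c2. x \<le> y \<and> maxchain P x y c1 \<and> maxchain P x y c2 \<and>
           ascent_free lam c1 \<and> ascent_free lam c2 \<and> c1 \<noteq> c2 \<longrightarrow> word lam c1 \<noteq> word lam c2"
  shows "rank_two_switching P z lam \<and> braid_relation P lam \<and> cancellative P lam"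
proof -
  interpret switching_labeling P z lam
    using assms(3-5) by unfold_locales
  have "distinct_ascent_free_words P lam"
    using assms(6) unfolding distinct_ascent_free_words_def .
  then show ?thesis using assms(1,5) braid_relation cancellative by blast
qed

end
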